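(* Let $m\ge 2$ be an integer and let $a\in\mathbb{R}\setminus\mathbb{Z}^-$, where $\mathbb{Z}^-=\{k\in\mathbb{Z}: k\le 0\}$. Let $\mathcal{H}_\infty=(\mathcal{H}_{i_1\cdots i_m})$ be the $m$-order infinite dimensional generalized Hilbert tensor with entries $$\mathcal{H}_{i_1 i_2\cdots i_m}=\frac{1}{i_1+i_2+\cdots+i_m-m+a},\qquad i_1,\dots,i_m\in\{1,2,3,\dots\}.$$ Then for every $x=(x_i)_{i=1}^\infty\in l^1$: (i) the series $$\mathcal{H}_\infty x^m=\sum_{i_1,\dots,i_m=1}^\infty \frac{x_{i_1}x_{i_2}\cdots x_{i_m}}{i_1+i_2+\cdots+i_m-m+a}$$ converges absolutely; in particular $|\mathcal{H}_\infty x^m|<\infty$; (ii) for every positive integer $i$, the series $$(\mathcal{H}_\infty x^{m-1})_i=\sum_{i_2,\dots,i_m=1}^\infty \frac{x_{i_2}\cdots x_{i_m}}{i+i_2+\cdots+i_m-m+a}$$ converges absolutely, so that the infinite vector $\mathcal{H}_\infty x^{m-1}$ is well defined.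
   Context: $l^1$ denotes the space of real sequences $x=(x_i)_{i=1}^\infty$ with $\sum_{i=1}^\infty|x_i|<\infty$. Since $a\notin\mathbb{Z}^-$ and $i_1+\cdots+i_m-m$ is a nonnegative integer, all denominators are nonzero. *)

theory Defs
  imports "HOL-Analysis.Analysis"
begin

definition gen_hilbert :: "nat \<Rightarrow> real \<Rightarrow> (nat \<Rightarrow> nat) \<Rightarrow> real" where
  "gen_hilbert m a \<iota> = 1 / ((\<Sum>k<m. real (\<iota> k)) - real m + a)"

definition pos_multi_idx :: "nat \<Rightarrow> (nat \<Rightarrow> nat) set" where
  "pos_multi_idx n = PiE {..<n} (\<lambda>_. {1..})"

definition l1_seq :: "(nat \<Rightarrow> real) \<Rightarrow> bool" where
  "l1_seq x \<longleftrightarrow> (\<lambda>i. \<bar>x i\<bar>) summable_on {1..}"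

end

theory Submission
  imports Defs
begin

text \<open>The Hilbert tensor entry at a positive multi-index is 1/(n + a), where
  n = i_1 + ... + i_m - m is a natural number, and these values are bounded uniformly
  in n: finitely many are arbitrary, the rest lie in [0, 1]. The tensor is therefore
  a bounded multiplier, and absolute summability of x_{i_1} ... x_{i_m} over all
  positive multi-indices is inherited from x \<in> l^1 by the product formula for sums
  over Cartesian products.\<close>

(* The bound needs no hypothesis on a: a zero denominator gives 1/0 = 0 in HOL.
   Hence the assumption a \<notin> \<int>\<^sup>- of the theorem only guarantees that the entries are genuine. *)
lemma bounded_inverse_nat_shift:
  fixes a :: real
  obtains C where "\<And>n::nat. \<bar>1 / (real n + a)\<bar> \<le> C"
proof
  define N where "N = nat \<lceil>\<bar>a\<bar>\<rceil> + 1"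
  fix n :: nat
  show "\<bar>1 / (real n + a)\<bar> \<le> (\<Sum>k\<le>N. \<bar>1 / (real k + a)\<bar>) + 1"
  proof (cases "n \<le> N")
    case True
    then have "\<bar>1 / (real n + a)\<bar> \<le> (\<Sum>k\<le>N. \<bar>1 / (real k + a)\<bar>)"
      by (intro member_le_sum) auto
    then show ?thesis by linarith
  next
    case False
    have "real N \<ge> \<bar>a\<bar> + 1"
      unfolding N_def using real_nat_ceiling_ge[of "\<bar>a\<bar>"] by simp
    with False have "real n + a \<ge> 1" by linarith
    then have "\<bar>1 / (real n + a)\<bar> \<le> 1" by simp
    moreover have "0 \<le> (\<Sum>k\<le>N. \<bar>1 / (real k + a)\<bar>)" by (intro sum_nonneg) auto
    ultimately show ?thesis by linarith
  qed
qed

lemma gen_hilbert_bounded: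
  fixes a :: real
  obtains C where "\<And>\<iota>. (\<And>k. k < m \<Longrightarrow> \<iota> k \<ge> 1) \<Longrightarrow> \<bar>gen_hilbert m a \<iota>\<bar> \<le> C"
proof -
  obtain C where C: "\<And>n::nat. \<bar>1 / (real n + a)\<bar> \<le> C"
    using bounded_inverse_nat_shift by blast
  have "\<bar>gen_hilbert m a \<iota>\<bar> \<le> C" if pos: "\<And>k. k < m \<Longrightarrow> \<iota> k \<ge> 1" for \<iota>
  proof -
    have "(\<Sum>k<m. \<iota> k) \<ge> (\<Sum>k<m. 1)" using pos by (intro sum_mono) auto
    then have "(\<Sum>k<m. real (\<iota> k)) - real m + a = real ((\<Sum>k<m. \<iota> k) - m) + a"
      by (simp flip: of_nat_sum add: of_nat_diff)
    then show ?thesis unfolding gen_hilbert_def using C by metis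
  qed
  then show thesis using that by blast
qed

lemma l1_seq_prod_abs_summable:
  assumes "l1_seq x"
  shows "(\<lambda>\<iota>. \<bar>\<Prod>k<n. x (\<iota> k)\<bar>) summable_on pos_multi_idx n"
proof -
  have "Infinite_Set_Sum.abs_summable_on x {1..}"
    using assms unfolding l1_seq_def abs_summable_equivalent[symmetric] by simp
  then have "Infinite_Set_Sum.abs_summable_on (\<lambda>\<iota>. \<Prod>k<n. x (\<iota> k)) (pos_multi_idx n)"
    unfolding pos_multi_idx_def by (intro Infinite_Set_Sum.abs_summable_on_prod_PiE) auto
  then show ?thesis unfolding abs_summable_equivalent[symmetric] by simp
qed

lemma abs_summable_on_bounded_mult:
  fixes f g :: "'a \<Rightarrow> real"
  assumes "(\<lambda>z. \<bar>g z\<bar>) summable_on A" and "\<And>z. z \<in> A \<Longrightarrow> \<bar>f z\<bar> \<le> C"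
  shows "(\<lambda>z. \<bar>f z * g z\<bar>) summable_on A"
proof (rule summable_on_comparison_test)
  show "(\<lambda>z. C * \<bar>g z\<bar>) summable_on A"
    using assms(1) by (rule summable_on_cmult_right)
  show "\<bar>f z * g z\<bar> \<le> C * \<bar>g z\<bar>" if "z \<in> A" for z
    using assms(2)[OF that] by (simp add: abs_mult mult_right_mono)
qed simp

theorem proposition1p1:
  fixes m :: nat and a :: real and x :: "nat \<Rightarrow> real"
  assumes "m \<ge> 2"
    and "\<forall>k::int. k \<le> 0 \<longrightarrow> a \<noteq> of_int k"
    and "l1_seq x"
  shows "(\<lambda>\<iota>. \<bar>gen_hilbert m a \<iota> * (\<Prod>k<m. x (\<iota> k))\<bar>) summable_on pos_multi_idx m
     \<and> (\<forall>i\<ge>1. (\<lambda>\<iota>. \<bar>gen_hilbert m a (\<iota>(m - 1 := i)) * (\<Prod>k<m - 1. x (\<iota> k))\<bar>)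
                 summable_on pos_multi_idx (m - 1))"
proof (intro conjI allI impI)
  obtain C where C: "\<And>\<iota>. (\<And>k. k < m \<Longrightarrow> \<iota> k \<ge> 1) \<Longrightarrow> \<bar>gen_hilbert m a \<iota>\<bar> \<le> C"
    using gen_hilbert_bounded by blast
  have "\<iota> \<in> pos_multi_idx m \<Longrightarrow> \<bar>gen_hilbert m a \<iota>\<bar> \<le> C" for \<iota>
    by (rule C) (auto simp: pos_multi_idx_def)
  with l1_seq_prod_abs_summable[OF assms(3)]
  show "(\<lambda>\<iota>. \<bar>gen_hilbert m a \<iota> * (\<Prod>k<m. x (\<iota> k))\<bar>) summable_on pos_multi_idx m"
    by (rule abs_summable_on_bounded_mult[where C = C])
  fix i :: nat
  assume "i \<ge> 1"
  have "\<bar>gen_hilbert m a (\<iota>(m - 1 := i))\<bar> \<le> C" if "\<iota> \<in> pos_multi_idx (m - 1)" for \<iota>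
  proof (rule C)
    fix k
    assume "k < m"
    with that \<open>i \<ge> 1\<close> show "1 \<le> (\<iota>(m - 1 := i)) k"
      by (cases "k = m - 1") (simp_all add: pos_multi_idx_def PiE_iff)
  qed
  with l1_seq_prod_abs_summable[OF assms(3)]
  show "(\<lambda>\<iota>. \<bar>gen_hilbert m a (\<iota>(m - 1 := i)) * (\<Prod>k<m - 1. x (\<iota> k))\<bar>)
          summable_on pos_multi_idx (m - 1)"
    by (rule abs_summable_on_bounded_mult[where C = C])
qed

end
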